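(* Consider smoothed MaxSat/$k$-Flip on a CNF formula with $n$ variables and $m$ clauses, where each clause weight $w_i$ is drawn independently from a distribution with density $f_i:[0,1]\to[0,\phi]$, and let $B$ be the maximum number of clauses in which any variable occurs. Then the expected maximum number of iterations of local search (over all initial assignments and all improving sequences) is $O(3^{kB}n^k m^2\phi)$, with an absolute hidden constant.
   Context: MaxSat/$k$-Flip: given a CNF formula with clauses $C_1,\dots,C_m$ over Boolean variables $x_1,\dots,x_n$ and clause weights $w_1,\dots,w_m$, the weight of a truth assignment is the total weight of satisfied clauses; the $k$-Flip neighbours of an assignment are those obtained by changing the truth value of at most $k$ variables; a solution is an assignment with no neighbour of strictly larger weight. Local search repeatedly moves to a strictly better neighbour. *)

theory Defs
  imports "HOL-Probability.Probability"
begin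

text \<open>A literal is a pair (variable index, polarity); a clause is a finite set of
literals; a CNF formula is a list of clauses C_0, ..., C_{m-1}.\<close>

type_synonym literal = "nat \<times> bool"
type_synonym clause = "literal set"
type_synonym cnf = "clause list"

definition assignments :: "nat \<Rightarrow> (nat \<Rightarrow> bool) set" where
  "assignments n = {a. \<forall>x. n \<le> x \<longrightarrow> \<not> a x}"

definition wf_cnf :: "nat \<Rightarrow> cnf \<Rightarrow> bool" where
  "wf_cnf n F \<longleftrightarrow> (\<forall>C\<in>set F. finite C \<and> (\<forall>l\<in>C. fst l < n))"

definition lit_sat :: "(nat \<Rightarrow> bool) \<Rightarrow> literal \<Rightarrow> bool" where
  "lit_sat a l \<longleftrightarrow> a (fst l) = snd l"

definition clause_sat :: "(nat \<Rightarrow> bool) \<Rightarrow> clause \<Rightarrow> bool" where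
  "clause_sat a C \<longleftrightarrow> (\<exists>l\<in>C. lit_sat a l)"

definition cnf_weight :: "cnf \<Rightarrow> (nat \<Rightarrow> real) \<Rightarrow> (nat \<Rightarrow> bool) \<Rightarrow> real" where
  "cnf_weight F w a = (\<Sum>i<length F. if clause_sat a (F ! i) then w i else 0)"

definition kflip_neighbour :: "nat \<Rightarrow> nat \<Rightarrow> (nat \<Rightarrow> bool) \<Rightarrow> (nat \<Rightarrow> bool) \<Rightarrow> bool" where
  "kflip_neighbour n k a b \<longleftrightarrow> b \<in> assignments n \<and> card {x. x < n \<and> a x \<noteq> b x} \<le> k"

definition improving_step :: "nat \<Rightarrow> nat \<Rightarrow> cnf \<Rightarrow> (nat \<Rightarrow> real) \<Rightarrow> (nat \<Rightarrow> bool) \<Rightarrow> (nat \<Rightarrow> bool) \<Rightarrow> bool" where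
  "improving_step n k F w a b \<longleftrightarrow> kflip_neighbour n k a b \<and> cnf_weight F w a < cnf_weight F w b"

definition improving_seq :: "nat \<Rightarrow> nat \<Rightarrow> cnf \<Rightarrow> (nat \<Rightarrow> real) \<Rightarrow> (nat \<Rightarrow> bool) list \<Rightarrow> bool" where
  "improving_seq n k F w s \<longleftrightarrow> s \<noteq> [] \<and> hd s \<in> assignments n \<and>
     (\<forall>j. Suc j < length s \<longrightarrow> improving_step n k F w (s ! j) (s ! Suc j))"

definition max_iterations :: "nat \<Rightarrow> nat \<Rightarrow> cnf \<Rightarrow> (nat \<Rightarrow> real) \<Rightarrow> ennreal" where
  "max_iterations n k F w = (SUP s\<in>{s. improving_seq n k F w s}. of_nat (length s - 1))"

definition occurrences :: "cnf \<Rightarrow> nat \<Rightarrow> nat" where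
  "occurrences F x = card {i. i < length F \<and> (\<exists>b. (x, b) \<in> F ! i)}"

definition max_occurrence :: "nat \<Rightarrow> cnf \<Rightarrow> nat" where
  "max_occurrence n F = Max (insert 0 (occurrences F ` {..<n}))"

definition density_bounded :: "real \<Rightarrow> (real \<Rightarrow> real) \<Rightarrow> bool" where
  "density_bounded \<phi> g \<longleftrightarrow> g \<in> borel_measurable lborel \<and>
     (\<forall>x. 0 \<le> g x \<and> g x \<le> \<phi>) \<and> (\<forall>x. x \<notin> {0..1} \<longrightarrow> g x = 0) \<and>
     (\<integral>\<^sup>+ x. ennreal (g x) \<partial>lborel) = 1"

definition weight_distr :: "nat \<Rightarrow> (nat \<Rightarrow> real \<Rightarrow> real) \<Rightarrow> (nat \<Rightarrow> real) measure" where
  "weight_distr m f = PiM {..<m} (\<lambda>i. density lborel (\<lambda>x. ennreal (f i x)))"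

end

theory Submission
  imports Defs
begin

text \<open>
  A k-flip step from a to b changes the weight by the inner product of w with a gain vector
  c \<in> {-1,0,1}^m, supported on the clauses touched by the at most k flipped variables; hence
  there are at most n^k 3^(kB) nonzero gain vectors, each with an entry of modulus one.
  Weights lie in [0,1], so the total gain of a run is at most m, and a run has fewer than 2^m
  steps because the weight strictly increases. A run of L steps therefore contains, for every
  t \<le> L, a step whose gain lies in (0, m/t], which bounds L by the number of pairs (t, c) with
  t \<le> 2^m and 0 < c \<bullet> w \<le> m/t. Conditioning on all weights except one with c_j = \<plusminus>1, the event
  0 < c \<bullet> w \<le> m/t asks w_j to lie in an interval of length m/t, which has probability at
  most \<phi> m/t. Summing, and using that the harmonic number of 2^m is at most m + 1, gives
  an expected bound of 2 \<cdot> 3^(kB) n^k m^2 \<phi>.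
\<close>

lemma density_bounded_nonneg: "density_bounded \<phi> g \<Longrightarrow> 0 \<le> \<phi>"
  unfolding density_bounded_def by (meson order_trans)

lemma density_bounded_measurable:
  "density_bounded \<phi> g \<Longrightarrow> (\<lambda>x. ennreal (g x)) \<in> borel_measurable borel"
  unfolding density_bounded_def by (simp add: measurable_lborel1)

lemma prob_space_density_bounded:
  "density_bounded \<phi> g \<Longrightarrow> prob_space (density lborel (\<lambda>x. ennreal (g x)))"
  using density_bounded_measurable[of \<phi> g]
  by (intro prob_spaceI) (auto simp: emeasure_density density_bounded_def measurable_lborel1)

lemma emeasure_density_bounded_Icc_le:
  assumes g: "density_bounded \<phi> g" and e: "0 \<le> e"
  shows "emeasure (density lborel (\<lambda>x. ennreal (g x))) {l..l+e} \<le> ennreal (\<phi> * e)"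
proof -
  have "emeasure (density lborel (\<lambda>x. ennreal (g x))) {l..l+e}
      = (\<integral>\<^sup>+x\<in>{l..l+e}. ennreal (g x) \<partial>lborel)"
    using density_bounded_measurable[OF g] by (simp add: emeasure_density measurable_lborel1)
  also have "\<dots> \<le> (\<integral>\<^sup>+x. ennreal \<phi> * indicator {l..l+e} x \<partial>lborel)"
    using g unfolding density_bounded_def
    by (intro nn_integral_mono) (auto simp: indicator_def intro!: ennreal_leI)
  also have "\<dots> = ennreal (\<phi> * e)"
    using e density_bounded_nonneg[OF g] by (simp add: nn_integral_cmult_indicator ennreal_mult)
  finally show ?thesis .
qed

lemma AE_density_bounded_unit_interval:
  assumes g: "density_bounded \<phi> g"
  shows "AE x in density lborel (\<lambda>x. ennreal (g x)). 0 \<le> x \<and> x \<le> 1"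
proof -
  have "AE x in lborel. 0 < ennreal (g x) \<longrightarrow> 0 \<le> x \<and> x \<le> 1"
    using g unfolding density_bounded_def by (intro AE_I2) force
  moreover have "(\<lambda>x. ennreal (g x)) \<in> borel_measurable lborel"
    using density_bounded_measurable[OF g] by (simp add: measurable_lborel1)
  ultimately show ?thesis by (simp only: AE_density)
qed

lemma emeasure_PiM_linear_window_le:
  fixes M :: "nat \<Rightarrow> real measure" and c :: "nat \<Rightarrow> real"
  assumes prob: "\<And>i. prob_space (M i)" and sets_M: "\<And>i. sets (M i) = sets borel"
    and I: "finite I" "j \<in> I" and cj: "\<bar>c j\<bar> = 1"
    and window: "\<And>l. emeasure (M j) {l..l+e} \<le> ennreal \<delta>"
  shows "emeasure (PiM I M)
    {w \<in> space (PiM I M). 0 < (\<Sum>i\<in>I. c i * w i) \<and> (\<Sum>i\<in>I. c i * w i) \<le> e} \<le> ennreal \<delta>"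
    (is "emeasure _ ?E \<le> _")
proof -
  \<comment> \<open>Fubini with coordinate j innermost: once the other coordinates are fixed, the event
    confines the j-th one to an interval of length e.\<close>
  interpret product_sigma_finite M
    unfolding product_sigma_finite_def using prob prob_space_imp_sigma_finite by blast
  define J where "J = I - {j}"
  have IJ: "I = insert j J" "j \<notin> J" "finite J" using I unfolding J_def by auto
  have E: "?E \<in> sets (PiM I M)" using sets_M by measurable
  have space_M: "space (M i) = UNIV" for i using sets_eq_imp_space_eq[OF sets_M[of i]] by simp
  have fiber: "(\<integral>\<^sup>+ y. indicator ?E (x(j := y)) \<partial>M j) \<le> ennreal \<delta>"
    if x: "x \<in> space (PiM J M)" for x
  proof -
    define r where "r = (\<Sum>i\<in>J. c i * x i)"
    define S where "S = {y. 0 < c j * y + r \<and> c j * y + r \<le> e}"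
    define l where "l = (if c j = 1 then - r else r - e)"
    have "(\<Sum>i\<in>I. c i * (x(j := y)) i) = c j * y + r" for y
      unfolding IJ r_def using IJ by (simp add: sum.insert) (intro sum.cong; auto)
    moreover have "x(j := y) \<in> space (PiM I M)" for y
      using x by (auto simp: space_PiM space_M IJ PiE_def extensional_def)
    ultimately have "indicator ?E (x(j := y)) = (indicator S y :: ennreal)" for y
      unfolding S_def by (auto simp: indicator_def)
    moreover have S: "S \<in> sets (M j)" unfolding S_def sets_M by measurable
    ultimately have "(\<integral>\<^sup>+ y. indicator ?E (x(j := y)) \<partial>M j) = emeasure (M j) S" by simp
    also have "\<dots> \<le> emeasure (M j) {l..l+e}"
      using cj unfolding S_def l_def by (intro emeasure_mono) (auto simp: abs_if sets_M split: if_splits)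
    also have "\<dots> \<le> ennreal \<delta>" by (rule window)
    finally show ?thesis .
  qed
  have "emeasure (PiM I M) ?E = (\<integral>\<^sup>+ x. (\<integral>\<^sup>+ y. indicator ?E (x(j := y)) \<partial>M j) \<partial>PiM J M)"
    using product_nn_integral_insert[OF IJ(3) IJ(2), of "indicator ?E"] E by (simp add: IJ(1))
  also have "\<dots> \<le> (\<integral>\<^sup>+ x. ennreal \<delta> \<partial>PiM J M)"
    by (intro nn_integral_mono fiber)
  also have "\<dots> = ennreal \<delta>"
  proof -
    interpret prob_space "PiM J M" by (intro prob_space_PiM prob)
    show ?thesis by (simp add: emeasure_space_1)
  qed
  finally show ?thesis .
qed

definition gain_window ::
    "nat \<Rightarrow> (nat \<Rightarrow> real \<Rightarrow> real) \<Rightarrow> (nat \<Rightarrow> real) \<Rightarrow> real \<Rightarrow> (nat \<Rightarrow> real) set" where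
  "gain_window m f c e =
     {w \<in> space (weight_distr m f). 0 < (\<Sum>i<m. c i * w i) \<and> (\<Sum>i<m. c i * w i) \<le> e}"

lemma gain_window_sets: "gain_window m f c e \<in> sets (weight_distr m f)"
  unfolding gain_window_def weight_distr_def by measurable

lemma emeasure_gain_window_le:
  assumes dens: "\<forall>i<m. density_bounded \<phi> (f i)" and j: "j < m" "\<bar>c j\<bar> = 1" and e: "0 \<le> e"
  shows "emeasure (weight_distr m f) (gain_window m f c e) \<le> ennreal (\<phi> * e)"
proof -
  define M where "M i = (if i < m then density lborel (\<lambda>x. ennreal (f i x)) else return lborel 0)" for i
  have "weight_distr m f = PiM {..<m} M"
    unfolding weight_distr_def M_def by (rule PiM_cong) auto
  moreover have "emeasure (PiM {..<m} M)
      {w \<in> space (PiM {..<m} M). 0 < (\<Sum>i<m. c i * w i) \<and> (\<Sum>i<m. c i * w i) \<le> e} \<le> ennreal (\<phi> * e)"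
  proof (rule emeasure_PiM_linear_window_le)
    show "prob_space (M i)" for i
      unfolding M_def using dens prob_space_density_bounded by (auto intro: prob_space_return)
    show "emeasure (M j) {l..l+e} \<le> ennreal (\<phi> * e)" for l
      unfolding M_def using j dens emeasure_density_bounded_Icc_le[OF _ e] by simp
  qed (use j in \<open>auto simp: M_def\<close>)
  ultimately show ?thesis unfolding gain_window_def by simp
qed

lemma AE_weight_distr_unit_interval:
  assumes dens: "\<forall>i<m. density_bounded \<phi> (f i)"
  shows "AE w in weight_distr m f. \<forall>i<m. 0 \<le> w i \<and> w i \<le> 1"
proof -
  have "AE w in weight_distr m f. 0 \<le> w i \<and> w i \<le> 1" if "i < m" for i
    unfolding weight_distr_def
    using dens that prob_space_density_bounded AE_density_bounded_unit_interval
    by (intro AE_PiM_component) auto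
  then show ?thesis by (subst AE_all_countable) auto
qed

definition gain_vector :: "cnf \<Rightarrow> (nat \<Rightarrow> bool) \<Rightarrow> (nat \<Rightarrow> bool) \<Rightarrow> nat \<Rightarrow> real" where
  "gain_vector F a b i =
     (if i < length F then of_bool (clause_sat b (F ! i)) - of_bool (clause_sat a (F ! i)) else 0)"

lemma cnf_weight_diff:
  "cnf_weight F w b - cnf_weight F w a = (\<Sum>i<length F. gain_vector F a b i * w i)"
  unfolding cnf_weight_def gain_vector_def by (simp add: sum_subtractf[symmetric]) (intro sum.cong, auto)

definition improvement_vectors :: "nat \<Rightarrow> nat \<Rightarrow> cnf \<Rightarrow> (nat \<Rightarrow> real) set" where
  "improvement_vectors n k F =
     {gain_vector F a b | a b. kflip_neighbour n k a b \<and> gain_vector F a b \<noteq> (\<lambda>_. 0)}"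

lemma improvement_vector_unit_entry:
  "c \<in> improvement_vectors n k F \<Longrightarrow> \<exists>j<length F. \<bar>c j\<bar> = 1"
  unfolding improvement_vectors_def gain_vector_def by (force split: if_splits)

definition clauses_of :: "cnf \<Rightarrow> nat set \<Rightarrow> nat set" where
  "clauses_of F S = {i. i < length F \<and> (\<exists>x\<in>S. \<exists>b. (x, b) \<in> F ! i)}"

lemma finite_clauses_of: "finite (clauses_of F S)"
  unfolding clauses_of_def by simp

lemma card_clauses_of_le:
  assumes "finite S" "S \<subseteq> {..<n}"
  shows "card (clauses_of F S) \<le> card S * max_occurrence n F"
proof -
  have "clauses_of F S = (\<Union>x\<in>S. clauses_of F {x})" unfolding clauses_of_def by auto
  then have "card (clauses_of F S) \<le> (\<Sum>x\<in>S. card (clauses_of F {x}))"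
    using card_UN_le[OF assms(1)] by simp
  also have "\<dots> \<le> (\<Sum>x\<in>S. max_occurrence n F)"
  proof (intro sum_mono)
    fix x assume "x \<in> S"
    then have "occurrences F x \<le> max_occurrence n F"
      using assms(2) unfolding max_occurrence_def by (intro Max_ge) auto
    then show "card (clauses_of F {x}) \<le> max_occurrence n F"
      unfolding occurrences_def clauses_of_def by simp
  qed
  finally show ?thesis by simp
qed

definition ternary_vectors :: "'a set \<Rightarrow> ('a \<Rightarrow> real) set" where
  "ternary_vectors I = {c. \<forall>i. c i \<in> {-1, 0, 1} \<and> (i \<notin> I \<longrightarrow> c i = 0)}"

lemma finite_card_ternary_vectors:
  assumes "finite I"
  shows "finite (ternary_vectors I)" and "card (ternary_vectors I) \<le> 3 ^ card I"
proof -
  define extend where "extend h i = (if i \<in> I then h i else 0)" for h :: "'a \<Rightarrow> real" and i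
  have "ternary_vectors I \<subseteq> extend ` PiE I (\<lambda>_. {-1, 0, 1})"
  proof
    fix c assume c: "c \<in> ternary_vectors I"
    then have "c = extend (restrict c I)" unfolding extend_def ternary_vectors_def by auto
    moreover have "restrict c I \<in> PiE I (\<lambda>_. {-1, 0, 1})" using c unfolding ternary_vectors_def by auto
    ultimately show "c \<in> extend ` PiE I (\<lambda>_. {-1, 0, 1})" by blast
  qed
  moreover have "finite (PiE I (\<lambda>_. {-1, 0, 1::real}))" using assms by (simp add: finite_PiE)
  moreover have "card (extend ` PiE I (\<lambda>_. {-1, 0, 1})) \<le> 3 ^ card I"
    using card_image_le[OF calculation(2), of extend] assms by (simp add: card_PiE numeral_3_eq_3)
  ultimately show "finite (ternary_vectors I)" and "card (ternary_vectors I) \<le> 3 ^ card I"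
    by (meson card_mono finite_imageI finite_subset order_trans)+
qed

lemma gain_vector_ternary:
  assumes wf: "wf_cnf n F"
  shows "gain_vector F a b \<in> ternary_vectors (clauses_of F {x. x < n \<and> a x \<noteq> b x})"
proof -
  have "gain_vector F a b i = 0" if i: "i < length F" "i \<notin> clauses_of F {x. x < n \<and> a x \<noteq> b x}" for i
  proof -
    have "lit_sat a l = lit_sat b l" if l: "l \<in> F ! i" for l
    proof -
      have "fst l < n" using wf nth_mem[OF i(1)] l unfolding wf_cnf_def by blast
      then show ?thesis using i l unfolding clauses_of_def lit_sat_def by (cases l) auto
    qed
    then have "clause_sat a (F ! i) = clause_sat b (F ! i)" unfolding clause_sat_def by auto
    then show ?thesis unfolding gain_vector_def by simp
  qed
  then show ?thesis unfolding ternary_vectors_def gain_vector_def by (auto split: if_splits)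
qed

lemma finite_improvement_vectors: "finite (improvement_vectors n k F)"
proof -
  have "improvement_vectors n k F \<subseteq> ternary_vectors {..<length F}"
    unfolding improvement_vectors_def ternary_vectors_def gain_vector_def by auto
  then show ?thesis using finite_card_ternary_vectors[of "{..<length F}"] by (auto intro: finite_subset)
qed

lemma ex_PiE_image_eq:
  assumes "finite D" "D \<noteq> {}" "card D \<le> k" "D \<subseteq> A"
  shows "\<exists>g\<in>PiE {..<k} (\<lambda>_. A). g ` {..<k} = D"
proof -
  obtain xs where xs: "set xs = D" "distinct xs" using finite_distinct_list[OF assms(1)] by blast
  define ys where "ys = xs @ replicate (k - length xs) (hd xs)"
  have "length xs = card D" using xs distinct_card by fastforce
  then have len: "length ys = k" using assms(3) unfolding ys_def by simp
  have set_ys: "set ys = D" using xs assms(2) unfolding ys_def by (cases xs) auto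
  have "restrict (nth ys) {..<k} ` {..<k} = D"
    using len set_ys by (auto simp: set_conv_nth)
  moreover have "restrict (nth ys) {..<k} \<in> PiE {..<k} (\<lambda>_. A)"
    using len set_ys assms(4) by (auto simp: set_conv_nth)
  ultimately show ?thesis by blast
qed

lemma card_improvement_vectors_le:
  assumes wf: "wf_cnf n F"
  shows "card (improvement_vectors n k F) \<le> n ^ k * 3 ^ (k * max_occurrence n F)"
proof -
  let ?G = "PiE {..<k} (\<lambda>_. {..<n})"
  let ?T = "\<lambda>g. ternary_vectors (clauses_of F (g ` {..<k}))"
  have sub: "improvement_vectors n k F \<subseteq> (\<Union>g\<in>?G. ?T g)"
  proof
    fix c assume "c \<in> improvement_vectors n k F"
    then obtain a b where c: "c = gain_vector F a b" "c \<noteq> (\<lambda>_. 0)" and ab: "kflip_neighbour n k a b"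
      unfolding improvement_vectors_def by blast
    define D where "D = {x. x < n \<and> a x \<noteq> b x}"
    have c_D: "c \<in> ternary_vectors (clauses_of F D)" unfolding c D_def by (rule gain_vector_ternary[OF wf])
    have "D \<noteq> {}"
      using c_D c(2) unfolding ternary_vectors_def clauses_of_def by auto
    moreover have "card D \<le> k" using ab unfolding kflip_neighbour_def D_def by simp
    ultimately obtain g where "g \<in> ?G" "g ` {..<k} = D"
      using ex_PiE_image_eq[of D k "{..<n}"] unfolding D_def by auto
    then show "c \<in> (\<Union>g\<in>?G. ?T g)" using c_D by auto
  qed
  moreover have T: "finite (?T g) \<and> card (?T g) \<le> 3 ^ (k * max_occurrence n F)" if "g \<in> ?G" for g
  proof -
    have "card (clauses_of F (g ` {..<k})) \<le> card (g ` {..<k}) * max_occurrence n F"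
      using that by (intro card_clauses_of_le) auto
    also have "\<dots> \<le> k * max_occurrence n F"
      using card_image_le[of "{..<k}" g] by (simp add: mult_right_mono)
    finally show ?thesis
      using finite_card_ternary_vectors[OF finite_clauses_of]
      by (meson le_trans one_le_numeral power_increasing)
  qed
  moreover have "finite ?G" by (simp add: finite_PiE)
  ultimately have fin: "finite (\<Union>g\<in>?G. ?T g)" by blast
  have "card (improvement_vectors n k F) \<le> card (\<Union>g\<in>?G. ?T g)" using fin sub by (rule card_mono)
  also have "\<dots> \<le> (\<Sum>g\<in>?G. card (?T g))" by (rule card_UN_le) (simp add: finite_PiE)
  also have "\<dots> \<le> (\<Sum>g\<in>?G. 3 ^ (k * max_occurrence n F))" using T by (intro sum_mono) blast
  also have "\<dots> = n ^ k * 3 ^ (k * max_occurrence n F)" by (simp add: card_PiE)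
  finally show ?thesis .
qed

lemma improving_seq_step:
  assumes "improving_seq n k F w s" "Suc j < length s"
  shows "gain_vector F (s ! j) (s ! Suc j) \<in> improvement_vectors n k F"
    and "0 < (\<Sum>i<length F. gain_vector F (s ! j) (s ! Suc j) i * w i)"
proof -
  have step: "improving_step n k F w (s ! j) (s ! Suc j)"
    using assms unfolding improving_seq_def by blast
  then show pos: "0 < (\<Sum>i<length F. gain_vector F (s ! j) (s ! Suc j) i * w i)"
    unfolding improving_step_def cnf_weight_diff[symmetric] by simp
  then have "gain_vector F (s ! j) (s ! Suc j) \<noteq> (\<lambda>_. 0)" by auto
  with step show "gain_vector F (s ! j) (s ! Suc j) \<in> improvement_vectors n k F"
    unfolding improving_step_def improvement_vectors_def by blast
qed

lemma improving_seq_weight_less: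
  assumes s: "improving_seq n k F w s"
  shows "i < j \<Longrightarrow> j < length s \<Longrightarrow> cnf_weight F w (s ! i) < cnf_weight F w (s ! j)"
proof (induction j)
  case (Suc j)
  have "cnf_weight F w (s ! j) < cnf_weight F w (s ! Suc j)"
    using s Suc.prems unfolding improving_seq_def improving_step_def by blast
  with Suc show ?case by (cases "i = j") auto
qed simp

lemma length_improving_seq_le:
  assumes s: "improving_seq n k F w s"
  shows "length s \<le> 2 ^ length F"
proof -
  define sat where "sat a = {i. i < length F \<and> clause_sat a (F ! i)}" for a
  have weight_sat: "cnf_weight F w a = (\<Sum>i\<in>sat a. w i)" for a
    unfolding cnf_weight_def sat_def by (simp add: sum.If_cases Int_def conj_commute)
  have "inj_on (\<lambda>j. sat (s ! j)) {..<length s}"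
  proof (rule inj_onI)
    fix i j assume ij: "i \<in> {..<length s}" "j \<in> {..<length s}" "sat (s ! i) = sat (s ! j)"
    then have "cnf_weight F w (s ! i) = cnf_weight F w (s ! j)" by (simp add: weight_sat)
    with ij show "i = j" using improving_seq_weight_less[OF s] by (metis lessThan_iff linorder_neqE_nat less_irrefl)
  qed
  moreover have "(\<lambda>j. sat (s ! j)) ` {..<length s} \<subseteq> Pow {..<length F}" unfolding sat_def by auto
  ultimately have "card {..<length s} \<le> card (Pow {..<length F})"
    by (intro card_inj_on_le) auto
  then show ?thesis by (simp add: card_Pow)
qed

lemma cnf_weight_bounds:
  assumes "\<forall>i<length F. 0 \<le> w i \<and> w i \<le> 1"
  shows "0 \<le> cnf_weight F w a" and "cnf_weight F w a \<le> real (length F)"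
proof -
  show "0 \<le> cnf_weight F w a" unfolding cnf_weight_def using assms by (intro sum_nonneg) auto
  have "cnf_weight F w a \<le> (\<Sum>i<length F. 1)" unfolding cnf_weight_def using assms by (intro sum_mono) auto
  then show "cnf_weight F w a \<le> real (length F)" by simp
qed

lemma improving_seq_ex_small_gain:
  assumes s: "improving_seq n k F w s" and w: "\<forall>i<length F. 0 \<le> w i \<and> w i \<le> 1"
    and t: "1 \<le> t" "t < length s"
  shows "\<exists>c\<in>improvement_vectors n k F.
    0 < (\<Sum>i<length F. c i * w i) \<and> (\<Sum>i<length F. c i * w i) \<le> real (length F) / real t"
proof (rule ccontr)
  assume no_small: "\<not> ?thesis"
  define gain where "gain j = cnf_weight F w (s ! Suc j) - cnf_weight F w (s ! j)" for j
  have big: "real (length F) / real t < gain j" if "j < t" for j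
    using improving_seq_step[OF s, of j] no_small that t unfolding gain_def cnf_weight_diff by force
  have "real (length F) = (\<Sum>j<t. real (length F) / real t)" using t by simp
  also have "\<dots> < (\<Sum>j<t. gain j)" using big t by (intro sum_strict_mono) (auto simp: lessThan_empty_iff)
  also have "\<dots> = cnf_weight F w (s ! t) - cnf_weight F w (s ! 0)"
    unfolding gain_def by (rule sum_lessThan_telescope)
  also have "\<dots> \<le> real (length F)"
    using cnf_weight_bounds[OF w, of "s ! t"] cnf_weight_bounds[OF w, of "s ! 0"] by linarith
  finally show False by simp
qed

lemma max_iterations_le_windows:
  assumes "w \<in> space (weight_distr (length F) f)" and w: "\<forall>i<length F. 0 \<le> w i \<and> w i \<le> 1"
  shows "max_iterations n k F w \<le> (\<Sum>t\<in>{1..2 ^ length F}. \<Sum>c\<in>improvement_vectors n k F.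
    indicator (gain_window (length F) f c (real (length F) / real t)) w)"
  unfolding max_iterations_def
proof (rule SUP_least, clarify)
  fix s assume s: "improving_seq n k F w s"
  let ?count = "\<lambda>t. \<Sum>c\<in>improvement_vectors n k F.
    indicator (gain_window (length F) f c (real (length F) / real t)) w :: ennreal"
  have "of_nat (length s - 1) = (\<Sum>t\<in>{1..length s - 1}. 1 :: ennreal)" by simp
  also have "\<dots> \<le> (\<Sum>t\<in>{1..length s - 1}. ?count t)"
  proof (rule sum_mono)
    fix t assume "t \<in> {1..length s - 1}"
    then have "1 \<le> t" "t < length s" by auto
    then obtain c where c: "c \<in> improvement_vectors n k F"
      "w \<in> gain_window (length F) f c (real (length F) / real t)"
      using improving_seq_ex_small_gain[OF s w] assms(1) unfolding gain_window_def by auto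
    then have "1 = (indicator (gain_window (length F) f c (real (length F) / real t)) w :: ennreal)"
      by simp
    also have "\<dots> \<le> ?count t"
      by (rule member_le_sum[OF c(1)]) (simp_all add: finite_improvement_vectors)
    finally show "1 \<le> ?count t" .
  qed
  also have "\<dots> \<le> (\<Sum>t\<in>{1..2 ^ length F}. ?count t)"
    using length_improving_seq_le[OF s] by (intro sum_mono2) auto
  finally show "of_nat (length s - 1) \<le> (\<Sum>t\<in>{1..2 ^ length F}. ?count t)" .
qed

lemma harm_two_power_le: "harm (2 ^ m) \<le> (real m + 1 :: real)"
proof (induction m)
  case (Suc m)
  have "{1..2 ^ Suc m} = {1..2 ^ m} \<union> {2 ^ m <..(2::nat) ^ Suc m}" by auto
  then have "harm (2 ^ Suc m) = (harm (2 ^ m) :: real) + (\<Sum>t\<in>{2 ^ m <..(2::nat) ^ Suc m}. inverse (real t))"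
    unfolding harm_def by (simp only:) (rule sum.union_disjoint; auto)
  also have "(\<Sum>t\<in>{2 ^ m <..(2::nat) ^ Suc m}. inverse (real t))
      \<le> card {2 ^ m <..(2::nat) ^ Suc m} * inverse (2 ^ m)"
    by (rule sum_bounded_above) (auto simp: le_imp_inverse_le)
  also have "\<dots> = 1" by simp
  finally show ?case using Suc by simp
qed (simp add: harm_def)

lemma density_bound_times_length_nonneg:
  assumes "\<forall>i<m. density_bounded \<phi> (f i)"
  shows "0 \<le> \<phi> * real m"
  using assms density_bounded_nonneg by (cases m) auto

lemma nn_integral_max_iterations_le:
  assumes dens: "\<forall>i<length F. density_bounded \<phi> (f i)"
  shows "(\<integral>\<^sup>+w. max_iterations n k F w \<partial>weight_distr (length F) f)
    \<le> ennreal (real (card (improvement_vectors n k F)) * (\<phi> * real (length F)) * harm (2 ^ length F))"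
proof -
  define m where "m = length F"
  define P where "P = improvement_vectors n k F"
  define W where "W = weight_distr m f"
  have nonneg: "0 \<le> \<phi> * real m" using density_bound_times_length_nonneg dens unfolding m_def by blast
  have "AE w in W. max_iterations n k F w
      \<le> (\<Sum>t\<in>{1..2 ^ m}. \<Sum>c\<in>P. indicator (gain_window m f c (real m / real t)) w)"
    using AE_weight_distr_unit_interval[OF dens] AE_space[of W] unfolding W_def m_def P_def
    by eventually_elim (rule max_iterations_le_windows)
  then have "(\<integral>\<^sup>+w. max_iterations n k F w \<partial>W)
      \<le> (\<integral>\<^sup>+w. (\<Sum>t\<in>{1..2 ^ m}. \<Sum>c\<in>P. indicator (gain_window m f c (real m / real t)) w) \<partial>W)"
    by (rule nn_integral_mono_AE)
  also have "\<dots> = (\<Sum>t\<in>{1..2 ^ m}. \<Sum>c\<in>P. emeasure W (gain_window m f c (real m / real t)))"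
    using gain_window_sets[of m f] by (simp add: W_def nn_integral_sum borel_measurable_sum)
  also have "\<dots> \<le> (\<Sum>t\<in>{1..2 ^ m}. \<Sum>c\<in>P. ennreal (\<phi> * (real m / real t)))"
  proof (intro sum_mono)
    fix t c assume "c \<in> P"
    then obtain j where "j < m" "\<bar>c j\<bar> = 1" using improvement_vector_unit_entry unfolding P_def m_def by blast
    then show "emeasure W (gain_window m f c (real m / real t)) \<le> ennreal (\<phi> * (real m / real t))"
      using dens unfolding W_def m_def by (intro emeasure_gain_window_le) auto
  qed
  also have "\<dots> = (\<Sum>t\<in>{1..2 ^ m}. ennreal (real (card P) * (\<phi> * real m) * inverse (real t)))"
  proof (intro sum.cong refl)
    fix t :: nat
    have "0 \<le> \<phi> * real m * inverse (real t)" using nonneg by simp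
    then show "(\<Sum>c\<in>P. ennreal (\<phi> * (real m / real t)))
        = ennreal (real (card P) * (\<phi> * real m) * inverse (real t))"
      by (simp add: ennreal_mult ennreal_of_nat_eq_real_of_nat divide_inverse mult.assoc)
  qed
  also have "\<dots> = ennreal (\<Sum>t\<in>{1..2 ^ m}. real (card P) * (\<phi> * real m) * inverse (real t))"
    using nonneg by (intro sum_ennreal) simp
  also have "\<dots> = ennreal (real (card P) * (\<phi> * real m) * harm (2 ^ m))"
    by (simp add: harm_def sum_distrib_left)
  finally show ?thesis unfolding W_def m_def P_def .
qed

theorem mainTheorem10:
  "\<exists>c::real. c > 0 \<and>
     (\<forall>(n::nat) (k::nat) (F::cnf) (f::nat \<Rightarrow> real \<Rightarrow> real) (\<phi>::real).
        wf_cnf n F \<longrightarrow> (\<forall>i<length F. density_bounded \<phi> (f i)) \<longrightarrow>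
        (\<integral>\<^sup>+ w. max_iterations n k F w \<partial>weight_distr (length F) f)
          \<le> ennreal (c * 3 ^ (k * max_occurrence n F) * real n ^ k * real (length F) ^ 2 * \<phi>))"
proof (intro exI[of _ 2] conjI allI impI)
  fix n k :: nat and F :: cnf and f :: "nat \<Rightarrow> real \<Rightarrow> real" and \<phi> :: real
  assume wf: "wf_cnf n F" and dens: "\<forall>i<length F. density_bounded \<phi> (f i)"
  define m where "m = length F"
  define N where "N = real n ^ k * 3 ^ (k * max_occurrence n F)"
  have nonneg: "0 \<le> \<phi> * real m" using density_bound_times_length_nonneg dens unfolding m_def by blast
  have "real (card (improvement_vectors n k F)) \<le> N"
    using of_nat_mono[OF card_improvement_vectors_le[OF wf]] by (simp add: N_def)
  then have "real (card (improvement_vectors n k F)) * (\<phi> * real m) * harm (2 ^ m)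
      \<le> N * (\<phi> * real m) * (real m + 1)"
    using nonneg by (intro mult_mono mult_right_mono harm_two_power_le harm_nonneg) (simp_all add: N_def)
  also have "\<dots> \<le> N * (\<phi> * real m) * (2 * real m)"
    unfolding N_def using nonneg by (cases "m = 0") (auto intro!: mult_left_mono)
  also have "\<dots> = 2 * 3 ^ (k * max_occurrence n F) * real n ^ k * real m ^ 2 * \<phi>"
    unfolding N_def by (simp add: power2_eq_square)
  finally show "(\<integral>\<^sup>+ w. max_iterations n k F w \<partial>weight_distr (length F) f)
      \<le> ennreal (2 * 3 ^ (k * max_occurrence n F) * real n ^ k * real (length F) ^ 2 * \<phi>)"
    using nn_integral_max_iterations_le[OF dens, of n k] unfolding m_def
    by (elim order_trans[OF _ ennreal_leI])
qed simp

end
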